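(* Let $r \in \mathbb{Q}_{>0}$ be such that $S_r$ is atomic. Then $\rho(S_r) < \infty$ if and only if $\rho_k(S_r) < \infty$ for every $k \in \mathbb{N}$.
   Context: For $q \in \mathbb{Q}_{>0}$, $\mathsf{n}(q),\mathsf{d}(q)$ are the positive coprime integers with $q = \mathsf{n}(q)/\mathsf{d}(q)$. $S_r$ is the additive submonoid of $(\mathbb{Q}_{\ge 0},+)$ generated by $\{r^n : n \in \mathbb{N}_0\}$; it is atomic exactly when $r=1$ or $\mathsf{n}(r)>1$. $\mathsf{L}(x)$ denotes the set of lengths of factorizations of $x$ into atoms. The elasticity of $x \ne 0$ is $\rho(x) = \sup \mathsf{L}(x)/\inf \mathsf{L}(x)$, and $\rho(S_r) = \sup\{\rho(x) : x \ne 0\}$. For $k \in \mathbb{N}$, $\mathcal{U}_k(S_r)$ is the set of $\ell \in \mathbb{N}$ for which there exist atoms $a_1,\dots,a_k,b_1,\dots,b_\ell$ with $a_1+\dots+a_k = b_1 + \dots + b_\ell$, and $\rho_k(S_r) = \sup \mathcal{U}_k(S_r)$ is the $k$-th local elasticity. *)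

theory Defs
  imports Complex_Main "HOL-Library.Multiset" "HOL-Library.Extended_Real"
begin

definition Sr :: "rat \<Rightarrow> rat set" where
  "Sr r = {sum_mset m | m. set_mset m \<subseteq> range (\<lambda>n::nat. r ^ n)}"

definition atoms :: "rat \<Rightarrow> rat set" where
  "atoms r = {a \<in> Sr r. a \<noteq> 0 \<and>
     \<not> (\<exists>b c. b \<in> Sr r \<and> c \<in> Sr r \<and> b \<noteq> 0 \<and> c \<noteq> 0 \<and> a = b + c)}"

definition atomic :: "rat \<Rightarrow> bool" where
  "atomic r \<longleftrightarrow> (\<forall>x \<in> Sr r. x \<noteq> 0 \<longrightarrow>
      (\<exists>m. set_mset m \<subseteq> atoms r \<and> sum_mset m = x))"

definition Lset :: "rat \<Rightarrow> rat \<Rightarrow> nat set" where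
  "Lset r x = {size m | m. set_mset m \<subseteq> atoms r \<and> sum_mset m = x}"

definition elast :: "rat \<Rightarrow> rat \<Rightarrow> ereal" where
  "elast r x = Sup ((\<lambda>l. ereal (real l)) ` Lset r x) / ereal (real (Inf (Lset r x)))"

definition elasticity :: "rat \<Rightarrow> ereal" where
  "elasticity r = (SUP x \<in> Sr r - {0}. elast r x)"

definition Uk :: "rat \<Rightarrow> nat \<Rightarrow> nat set" where
  "Uk r k = {l. l \<ge> 1 \<and> (\<exists>A B. set_mset A \<subseteq> atoms r \<and> set_mset B \<subseteq> atoms r \<and>
       size A = k \<and> size B = l \<and> sum_mset A = sum_mset B)}"

definition local_elasticity :: "rat \<Rightarrow> nat \<Rightarrow> ereal" where
  "local_elasticity r k = Sup ((\<lambda>l. ereal (real l)) ` Uk r k)"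

end

theory Submission
  imports Defs
begin

text \<open>
  Write \<open>r = n / d\<close> in lowest terms. Every element of \<open>S_r\<close> is a sum of powers \<open>r^j\<close>, so every atom
  is a power of \<open>r\<close>. If \<open>d = 1\<close>, then \<open>S_r = \<nat>\<close> with the single atom \<open>1\<close>, all factorizations of an
  element have the same length, and both elasticities are finite. If \<open>n = 1 < d\<close>, the relation
  \<open>r^j = d r^(j+1)\<close> shows that there are no atoms at all, so \<open>S_r\<close> is not atomic.
  In the remaining case no power \<open>r^i\<close> is a sum of two or more powers: for \<open>r > 1\<close> all summands have
  smaller exponents and clearing denominators would make \<open>d\<close> divide \<open>n^i\<close>; for \<open>r < 1\<close> the same
  argument applies to \<open>1 / r\<close> after reflecting the exponents. So every power is an atom, and the
  telescoping identity \<open>d r^(M+1) = n + (n - d)(r + \<dots> + r^M)\<close> provides, for every \<open>M\<close>, an element with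
  a factorization of length \<open>min n d\<close> and one of length at least \<open>M\<close>. Hence \<open>\<rho>(S_r)\<close> and
  \<open>\<rho>_(min n d)(S_r)\<close> are both infinite.
\<close>

definition pow_sum :: "rat \<Rightarrow> nat multiset \<Rightarrow> rat" where
  "pow_sum r J = (\<Sum>j\<in>#J. r ^ j)"

lemma pow_sum_empty [simp]: "pow_sum r {#} = 0"
  by (simp add: pow_sum_def)

lemma pow_sum_add_mset [simp]: "pow_sum r (add_mset j J) = r ^ j + pow_sum r J"
  by (simp add: pow_sum_def)

lemma pow_sum_union [simp]: "pow_sum r (A + B) = pow_sum r A + pow_sum r B"
  by (simp add: pow_sum_def)

lemma pow_sum_replicate_mset [simp]: "pow_sum r (replicate_mset c j) = of_nat c * r ^ j"
  by (induction c) (simp_all add: algebra_simps)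

lemma pow_sum_repeat_mset [simp]: "pow_sum r (repeat_mset c J) = of_nat c * pow_sum r J"
  by (induction c) (simp_all add: algebra_simps)

lemma pow_sum_mset_set: "pow_sum r (mset_set A) = (\<Sum>j\<in>A. r ^ j)"
  by (simp add: pow_sum_def sum_unfold_sum_mset)

lemma pow_sum_pos:
  assumes "r > 0" and "J \<noteq> {#}"
  shows "pow_sum r J > 0"
  using assms(2)
proof (induction J)
  case (add j J)
  then show ?case using assms(1) by (cases "J = {#}") (simp_all add: add_pos_pos)
qed simp

lemma Sr_eq_range_pow_sum: "Sr r = range (pow_sum r)"
proof (intro equalityI subsetI)
  fix x assume "x \<in> Sr r"
  then obtain m where m: "set_mset m \<subseteq> range (power r)" "x = sum_mset m"
    unfolding Sr_def by blast
  have "m = image_mset (power r) (image_mset (inv (power r)) m)"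
    using m(1) by (induction m) (auto simp: f_inv_into_f)
  then show "x \<in> range (pow_sum r)"
    using m(2) unfolding pow_sum_def by (metis rangeI)
next
  fix x assume "x \<in> range (pow_sum r)"
  then obtain J where "x = sum_mset (image_mset (power r) J)"
    unfolding pow_sum_def by blast
  moreover have "set_mset (image_mset (power r) J) \<subseteq> range (power r)" by auto
  ultimately show "x \<in> Sr r"
    unfolding Sr_def by blast
qed

lemma pow_sum_in_Sr: "pow_sum r J \<in> Sr r"
  by (simp add: Sr_eq_range_pow_sum)

lemma sum_notin_atoms: "b \<in> Sr r \<Longrightarrow> c \<in> Sr r \<Longrightarrow> b \<noteq> 0 \<Longrightarrow> c \<noteq> 0 \<Longrightarrow> b + c \<notin> atoms r"
  unfolding atoms_def by blast

lemma atoms_subset_powers: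
  assumes "r > 0"
  shows "atoms r \<subseteq> range (power r)"
proof
  fix a assume a: "a \<in> atoms r"
  then obtain J where J: "a = pow_sum r J"
    unfolding atoms_def Sr_eq_range_pow_sum by auto
  moreover have "a \<noteq> 0" using a by (simp add: atoms_def)
  ultimately obtain j J' where J': "J = add_mset j J'"
    by (metis multi_nonempty_split pow_sum_empty)
  have "J' = {#}"
  proof (rule ccontr)
    assume "J' \<noteq> {#}"
    then have "pow_sum r J' \<noteq> 0" using pow_sum_pos[OF assms \<open>J' \<noteq> {#}\<close>] by simp
    moreover have "r ^ j = pow_sum r {#j#}" "r ^ j \<noteq> 0" using assms by simp_all
    ultimately have "r ^ j + pow_sum r J' \<notin> atoms r"
      using sum_notin_atoms pow_sum_in_Sr by metis
    with a J J' show False by simp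
  qed
  with J J' show "a \<in> range (power r)" by simp
qed

lemma power_in_atoms:
  assumes "r > 0" and not_sum: "\<And>J. 2 \<le> size J \<Longrightarrow> pow_sum r J \<noteq> r ^ i"
  shows "r ^ i \<in> atoms r"
proof -
  have "r ^ i \<in> Sr r" "r ^ i \<noteq> 0"
    using pow_sum_in_Sr[of r "{#i#}"] assms(1) by simp_all
  moreover have "\<not> (\<exists>b c. b \<in> Sr r \<and> c \<in> Sr r \<and> b \<noteq> 0 \<and> c \<noteq> 0 \<and> r ^ i = b + c)"
  proof
    assume "\<exists>b c. b \<in> Sr r \<and> c \<in> Sr r \<and> b \<noteq> 0 \<and> c \<noteq> 0 \<and> r ^ i = b + c"
    then obtain Jb Jc where "pow_sum r Jb \<noteq> 0" "pow_sum r Jc \<noteq> 0" "pow_sum r (Jb + Jc) = r ^ i"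
      unfolding Sr_eq_range_pow_sum by auto
    moreover from this have "Jb \<noteq> {#}" "Jc \<noteq> {#}" by auto
    then have "2 \<le> size (Jb + Jc)"
      by (simp add: Suc_le_eq nonempty_has_size)
    ultimately show False using not_sum by blast
  qed
  ultimately show ?thesis
    unfolding atoms_def by blast
qed

lemma not_atomic_if_numerator_one:
  assumes q: "quotient_of r = (1, d)" and "d > 1"
  shows "\<not> atomic r"
proof
  assume "atomic r"
  have r: "r = 1 / of_int d" using quotient_of_div[OF q] by simp
  have "r > 0" using \<open>d > 1\<close> by (simp add: r)
  have "r ^ j \<notin> atoms r" for j
  proof
    assume atom: "r ^ j \<in> atoms r"
    \<comment> \<open>\<open>r^j = d r^(j+1) = r^(j+1) + (d - 1) r^(j+1)\<close>\<close>
    have "r ^ j = r ^ Suc j + pow_sum r (replicate_mset (nat d - 1) (Suc j))"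
      using \<open>d > 1\<close> by (simp add: r of_nat_diff field_simps)
    moreover have "pow_sum r (replicate_mset (nat d - 1) (Suc j)) \<noteq> 0" "r ^ Suc j \<noteq> 0"
      using \<open>d > 1\<close> \<open>r > 0\<close> by auto
    moreover have "r ^ Suc j = pow_sum r {#Suc j#}" by simp
    ultimately show False
      using atom sum_notin_atoms pow_sum_in_Sr by metis
  qed
  then have "atoms r = {}"
    using atoms_subset_powers[OF \<open>r > 0\<close>] by blast
  moreover have "(1::rat) \<in> Sr r"
    using pow_sum_in_Sr[of r "{#0#}"] by simp
  ultimately show False
    using \<open>atomic r\<close> unfolding atomic_def by fastforce
qed

lemma pow_sum_times_denominator_power:
  assumes r: "r = of_int n / of_int d" and "d \<noteq> 0" and lower: "\<forall>j\<in>#J. j < i"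
  shows "\<exists>z. pow_sum r J * of_int d ^ i = of_int (d * z)"
  using lower
proof (induction J)
  case empty
  show ?case by (auto intro: exI[of _ 0])
next
  case (add j J)
  then obtain z where z: "pow_sum r J * of_int d ^ i = of_int (d * z)" by auto
  obtain k where "i = Suc (j + k)" using add.prems by (auto dest: less_imp_Suc_add)
  then have "r ^ j * of_int d ^ i = of_int (d * (n ^ j * d ^ k))"
    using \<open>d \<noteq> 0\<close> by (simp add: r power_add power_divide)
  with z show ?case
    by (intro exI[of _ "n ^ j * d ^ k + z"]) (simp add: algebra_simps)
qed

lemma power_ne_pow_sum_of_lower_powers:
  assumes r: "r = of_int n / of_int d" and "coprime n d" and "d > 1" and "\<forall>j\<in>#J. j < i"
  shows "pow_sum r J \<noteq> r ^ i"
proof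
  assume eq: "pow_sum r J = r ^ i"
  obtain z where "pow_sum r J * of_int d ^ i = of_int (d * z)"
    using pow_sum_times_denominator_power[OF r _ assms(4)] \<open>d > 1\<close> by auto
  moreover have "pow_sum r J * of_int d ^ i = of_int (n ^ i)"
    using eq \<open>d > 1\<close> by (simp add: r power_divide)
  ultimately have "d dvd n ^ i"
    by (metis dvd_triv_left of_int_eq_iff)
  moreover have "coprime d (n ^ i)"
    using \<open>coprime n d\<close> by (simp add: coprime_commute)
  ultimately have "d dvd 1"
    using coprime_absorb_left by blast
  with \<open>d > 1\<close> show False
    using zdvd_imp_le by fastforce
qed

lemma pow_sum_inverse_reflect:
  assumes "r \<noteq> 0" and "\<forall>j\<in>#J. j \<le> M"
  shows "pow_sum (inverse r) (image_mset (\<lambda>j. M - j) J) = pow_sum r J / r ^ M"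
  using assms(2)
proof (induction J)
  case (add j J)
  then have "inverse r ^ (M - j) = r ^ j / r ^ M"
    using \<open>r \<noteq> 0\<close> by (simp add: power_diff power_inverse divide_inverse)
  with add show ?case by (simp add: add_divide_distrib)
qed simp

lemma pow_sum_gt_summand:
  assumes "r > 0" and "2 \<le> size J" and "j \<in># J"
  shows "r ^ j < pow_sum r J"
proof -
  obtain J' where J: "J = add_mset j J'" using assms(3) by (metis multi_member_split)
  then have "J' \<noteq> {#}" using assms(2) by auto
  with J show ?thesis using pow_sum_pos[OF assms(1)] by simp
qed

lemma power_ne_pow_sum_of_higher_powers:
  assumes r: "r = of_int n / of_int d" and "coprime n d" and "d > 0" and "n > 1"
    and higher: "\<forall>j\<in>#J. i < j"
  shows "pow_sum r J \<noteq> r ^ i"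
proof
  assume eq: "pow_sum r J = r ^ i"
  have "r \<noteq> 0" using assms by (simp add: r)
  with eq have "J \<noteq> {#}" by auto
  \<comment> \<open>Reflecting the exponents at \<open>M = max J\<close> gives a relation of the same kind for \<open>1 / r = d / n\<close>.\<close>
  define M where "M = Max (set_mset J)"
  have below_M: "\<forall>j\<in>#J. j \<le> M"
    by (simp add: M_def)
  obtain j where "j \<in># J" using \<open>J \<noteq> {#}\<close> by blast
  then have "i \<le> M" using higher below_M by force
  have "inverse r = of_int d / of_int n" by (simp add: r)
  moreover have "coprime d n" using \<open>coprime n d\<close> by (simp add: coprime_commute)
  moreover have "\<forall>j'\<in>#image_mset (\<lambda>j. M - j) J. j' < M - i"
    using higher below_M by (auto intro: diff_less_mono2 order_less_le_trans)
  moreover have "pow_sum (inverse r) (image_mset (\<lambda>j. M - j) J) = inverse r ^ (M - i)"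
    using pow_sum_inverse_reflect[OF \<open>r \<noteq> 0\<close> below_M] eq \<open>r \<noteq> 0\<close> \<open>i \<le> M\<close>
    by (simp add: power_diff power_inverse divide_inverse)
  ultimately show False
    using power_ne_pow_sum_of_lower_powers[of "inverse r" d n] \<open>n > 1\<close> by blast
qed

lemma powers_in_atoms:
  assumes q: "quotient_of r = (n, d)" and "n > 1" and "d > 1"
  shows "r ^ i \<in> atoms r"
proof -
  have r: "r = of_int n / of_int d" and "coprime n d"
    using quotient_of_div[OF q] quotient_of_coprime[OF q] by auto
  have "r > 0" using assms by (simp add: r)
  have "r \<noteq> 1" using q \<open>d > 1\<close> by auto
  show ?thesis
  proof (rule power_in_atoms[OF \<open>r > 0\<close>])
    fix J :: "nat multiset"
    assume "2 \<le> size J"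
    show "pow_sum r J \<noteq> r ^ i"
    proof
      assume eq: "pow_sum r J = r ^ i"
      then have smaller: "r ^ j < r ^ i" if "j \<in># J" for j
        using pow_sum_gt_summand[OF \<open>r > 0\<close> \<open>2 \<le> size J\<close> that] by simp
      consider "r > 1" | "r < 1" using \<open>r \<noteq> 1\<close> by fastforce
      then show False
      proof cases
        case 1
        then have "\<forall>j\<in>#J. j < i"
          using smaller power_less_imp_less_exp by blast
        with eq show False
          using power_ne_pow_sum_of_lower_powers[OF r \<open>coprime n d\<close> \<open>d > 1\<close>] by blast
      next
        case 2
        then have "\<forall>j\<in>#J. i < j"
          using smaller \<open>r > 0\<close> power_strict_decreasing_iff by blast
        with eq \<open>d > 1\<close> show False
          using power_ne_pow_sum_of_higher_powers[OF r \<open>coprime n d\<close> _ \<open>n > 1\<close>] by auto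
      qed
    qed
  qed
qed

lemma Sr_of_nat: "Sr (of_nat p) = range of_nat"
  unfolding Sr_eq_range_pow_sum
proof (intro equalityI subsetI)
  fix x assume "x \<in> range (pow_sum (of_nat p))"
  then obtain J where "x = pow_sum (of_nat p) J" by blast
  also have "pow_sum (of_nat p) J = of_nat (\<Sum>j\<in>#J. p ^ j)"
    by (induction J) simp_all
  finally show "x \<in> range of_nat" by blast
next
  fix x :: rat assume "x \<in> range of_nat"
  then obtain q where "x = of_nat q" by blast
  also have "of_nat q = pow_sum (of_nat p) (replicate_mset q 0)" by simp
  finally show "x \<in> range (pow_sum (of_nat p))" by blast
qed

lemma atoms_of_nat: "atoms (of_nat p) = {1}"
proof -
  have atom_iff: "of_nat q \<in> atoms (of_nat p) \<longleftrightarrow> q = 1" for q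
  proof -
    have "of_nat q \<in> atoms (of_nat p) \<longleftrightarrow>
        q \<noteq> 0 \<and> \<not> (\<exists>b c. b \<noteq> 0 \<and> c \<noteq> 0 \<and> q = b + c)"
      unfolding atoms_def Sr_of_nat by (auto simp flip: of_nat_add)
    also have "\<dots> \<longleftrightarrow> q = 1"
    proof
      assume q: "q \<noteq> 0 \<and> \<not> (\<exists>b c. b \<noteq> 0 \<and> c \<noteq> 0 \<and> q = b + c)"
      show "q = 1"
      proof (rule ccontr)
        assume "q \<noteq> 1"
        with q have "q = 1 + (q - 1)" "q - 1 \<noteq> 0" by auto
        with q show False by blast
      qed
    qed presburger
    finally show ?thesis .
  qed
  have "atoms (of_nat p) \<subseteq> range of_nat"
    using Sr_of_nat[of p] by (auto simp: atoms_def)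
  show ?thesis
  proof (intro equalityI subsetI)
    fix a assume "a \<in> atoms (of_nat p)"
    moreover from this obtain q where "a = of_nat q"
      using \<open>atoms (of_nat p) \<subseteq> range of_nat\<close> by blast
    ultimately show "a \<in> {1}" using atom_iff by simp
  next
    fix a :: rat assume "a \<in> {1}"
    then show "a \<in> atoms (of_nat p)" using atom_iff[of 1] by simp
  qed
qed

lemma sum_mset_eq_size_if_atoms_of_nat:
  "set_mset m \<subseteq> atoms (of_nat p) \<Longrightarrow> sum_mset m = of_nat (size m)"
  unfolding atoms_of_nat by (induction m) auto

lemma Lset_of_nat: "Lset (of_nat p) (of_nat q) = {q}"
proof -
  have "Lset (of_nat p) (of_nat q) \<subseteq> {q}"
    unfolding Lset_def by (auto simp: sum_mset_eq_size_if_atoms_of_nat)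
  moreover have "q \<in> Lset (of_nat p) (of_nat q)"
    unfolding Lset_def atoms_of_nat
    by (auto intro!: exI[of _ "replicate_mset q 1"] split: if_splits)
  ultimately show ?thesis by blast
qed

lemma elasticity_of_nat: "elasticity (of_nat p) \<le> 1"
  unfolding elasticity_def
proof (rule SUP_least)
  fix x assume "x \<in> Sr (of_nat p) - {0}"
  then obtain q where "x = of_nat q" "q \<noteq> 0"
    unfolding Sr_of_nat by auto
  then show "elast (of_nat p) x \<le> 1"
    by (simp add: elast_def Lset_of_nat divide_ereal_def)
qed

lemma local_elasticity_of_nat: "local_elasticity (of_nat p) k \<le> ereal (real k)"
proof -
  have "Uk (of_nat p) k \<subseteq> {k}"
    unfolding Uk_def by (auto simp: sum_mset_eq_size_if_atoms_of_nat)
  then show ?thesis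
    unfolding local_elasticity_def by (auto intro: Sup_least)
qed

lemma geometric_telescoping:
  fixes r d n :: "'a :: comm_ring_1"
  assumes "d * r = n"
  shows "n + (n - d) * (\<Sum>j=1..M. r ^ j) = d * r ^ Suc M"
proof (induction M)
  case 0
  show ?case using assms by simp
next
  case (Suc M)
  have "n + (n - d) * (\<Sum>j=1..Suc M. r ^ j) = d * r ^ Suc M + (n - d) * r ^ Suc M"
    using Suc by (simp add: algebra_simps)
  also have "\<dots> = d * r ^ Suc (Suc M)"
    using assms by (simp add: assms[symmetric] algebra_simps)
  finally show ?case .
qed

lemma pow_sum_eq_unbounded_size:
  assumes "of_nat d * r = of_nat n" and "n \<noteq> d"
  shows "\<exists>A B. size A = min n d \<and> M \<le> size B \<and> pow_sum r A = pow_sum r B"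
proof -
  define Block where "Block c = repeat_mset c (mset_set {1..M})" for c
  have size_Block: "size (Block c) = c * M" for c
    by (simp add: Block_def)
  have pow_sum_Block: "pow_sum r (Block c) = of_nat c * (\<Sum>j=1..M. r ^ j)" for c
    by (simp add: Block_def pow_sum_mset_set)
  have tele: "of_nat n + (of_nat n - of_nat d) * (\<Sum>j=1..M. r ^ j) = of_nat d * r ^ Suc M"
    using geometric_telescoping[OF assms(1)] .
  consider "d < n" | "n < d" using assms(2) by linarith
  then show ?thesis
  proof cases
    case 1
    have "size (replicate_mset d (Suc M)) = min n d"
      using 1 by simp
    moreover have "1 * M \<le> (n - d) * M"
      using 1 by (intro mult_le_mono1) simp
    then have "M \<le> size (replicate_mset n 0 + Block (n - d))"
      unfolding size_union size_replicate_mset size_Block by linarith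
    moreover have "pow_sum r (replicate_mset d (Suc M)) = pow_sum r (replicate_mset n 0 + Block (n - d))"
      using tele 1 by (simp add: pow_sum_Block of_nat_diff)
    ultimately show ?thesis by blast
  next
    case 2
    have "size (replicate_mset n 0) = min n d"
      using 2 by simp
    moreover have "1 * M \<le> (d - n) * M"
      using 2 by (intro mult_le_mono1) simp
    then have "M \<le> size (replicate_mset d (Suc M) + Block (d - n))"
      unfolding size_union size_replicate_mset size_Block by linarith
    moreover have "pow_sum r (replicate_mset n 0) = pow_sum r (replicate_mset d (Suc M) + Block (d - n))"
      using tele 2 by (simp add: pow_sum_Block of_nat_diff algebra_simps)
    ultimately show ?thesis by blast
  qed
qed

lemma size_in_Lset_pow_sum:
  assumes "\<And>j. r ^ j \<in> atoms r"
  shows "size J \<in> Lset r (pow_sum r J)"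
  unfolding Lset_def pow_sum_def using assms
  by (auto intro!: exI[of _ "image_mset (power r) J"])

lemma in_Uk_if_in_Lset:
  assumes "k \<in> Lset r x" and "l \<in> Lset r x" and "1 \<le> l"
  shows "l \<in> Uk r k"
proof -
  obtain A B where "set_mset A \<subseteq> atoms r" "sum_mset A = x" "size A = k"
    and "set_mset B \<subseteq> atoms r" "sum_mset B = x" "size B = l"
    using assms(1,2) unfolding Lset_def by blast
  then have "set_mset A \<subseteq> atoms r \<and> set_mset B \<subseteq> atoms r \<and> size A = k \<and> size B = l
      \<and> sum_mset A = sum_mset B"
    by simp
  with \<open>1 \<le> l\<close> show ?thesis
    unfolding Uk_def by blast
qed

lemma elast_ge_length_ratio:
  assumes "x \<noteq> 0" and "k \<in> Lset r x" and "l \<in> Lset r x"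
  shows "ereal (real l / real k) \<le> elast r x"
proof -
  define i where "i = Inf (Lset r x)"
  have "i \<in> Lset r x" "i \<le> k"
    using assms(2) by (auto simp: i_def Inf_nat_def intro: LeastI Least_le)
  moreover have "0 \<notin> Lset r x"
    using \<open>x \<noteq> 0\<close> by (auto simp: Lset_def)
  ultimately have "0 < i" "i \<le> k" by (auto intro: gr0I)
  have "ereal (real l / real k) \<le> ereal (real l / real i)"
    using \<open>0 < i\<close> \<open>i \<le> k\<close> by (simp add: divide_left_mono)
  also have "\<dots> = ereal (real l) / ereal (real i)"
    using \<open>0 < i\<close> by (simp add: divide_ereal_def divide_inverse)
  also have "\<dots> \<le> Sup ((\<lambda>l. ereal (real l)) ` Lset r x) / ereal (real i)"
    using assms(3) \<open>0 < i\<close> by (intro ereal_divide_right_mono Sup_upper) auto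
  also have "\<dots> = elast r x"
    by (simp add: elast_def i_def)
  finally show ?thesis .
qed

lemma local_elasticity_eq_infinity:
  assumes powers: "\<And>j. r ^ j \<in> atoms r"
    and long: "\<And>M. \<exists>A B. size A = k \<and> M \<le> size B \<and> pow_sum r A = pow_sum r B"
  shows "local_elasticity r k = \<infinity>"
proof (rule ereal_top)
  fix b :: real
  obtain M :: nat where "b \<le> M"
    using real_arch_simple by blast
  obtain A B where AB: "size A = k" "Suc M \<le> size B" "pow_sum r A = pow_sum r B"
    using long by blast
  have "k \<in> Lset r (pow_sum r A)" "size B \<in> Lset r (pow_sum r A)"
    using size_in_Lset_pow_sum[OF powers, of A] size_in_Lset_pow_sum[OF powers, of B] AB by simp_all
  then have "size B \<in> Uk r k"
    using AB(2) by (intro in_Uk_if_in_Lset) auto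
  then have "ereal (real (size B)) \<le> local_elasticity r k"
    unfolding local_elasticity_def by (intro Sup_upper) auto
  moreover have "ereal b \<le> ereal (real (size B))"
    using \<open>b \<le> M\<close> AB(2) by simp
  ultimately show "ereal b \<le> local_elasticity r k" by order
qed

lemma elasticity_eq_infinity:
  assumes "r > 0" and "1 \<le> k" and powers: "\<And>j. r ^ j \<in> atoms r"
    and long: "\<And>M. \<exists>A B. size A = k \<and> M \<le> size B \<and> pow_sum r A = pow_sum r B"
  shows "elasticity r = \<infinity>"
proof (rule ereal_top)
  fix b :: real
  obtain M :: nat where "b \<le> M"
    using real_arch_simple by blast
  obtain A B where AB: "size A = k" "M * k \<le> size B" "pow_sum r A = pow_sum r B"
    using long by blast
  define x where "x = pow_sum r A"
  have "A \<noteq> {#}" using AB(1) \<open>1 \<le> k\<close> by auto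
  then have "x \<noteq> 0"
    using pow_sum_pos[OF \<open>r > 0\<close> \<open>A \<noteq> {#}\<close>] by (simp add: x_def)
  then have x: "x \<in> Sr r - {0}"
    by (simp add: x_def Sr_eq_range_pow_sum)
  have "real M \<le> real (size B) / real k"
    using AB(2) \<open>1 \<le> k\<close> by (simp add: le_divide_eq flip: of_nat_mult)
  then have "ereal b \<le> ereal (real (size B) / real k)"
    using \<open>b \<le> M\<close> by simp
  also have "ereal (real (size B) / real k) \<le> elast r x"
    using size_in_Lset_pow_sum[OF powers, of A] size_in_Lset_pow_sum[OF powers, of B] AB
    by (intro elast_ge_length_ratio[OF \<open>x \<noteq> 0\<close>]) (simp_all add: x_def)
  also have "elast r x \<le> elasticity r"
    unfolding elasticity_def using x by (rule SUP_upper)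
  finally show "ereal b \<le> elasticity r" .
qed

lemma elasticities_infinite:
  assumes q: "quotient_of r = (n, d)" and "n > 1" and "d > 1"
  shows "elasticity r = \<infinity>" and "\<exists>k\<ge>1. local_elasticity r k = \<infinity>"
proof -
  have r: "r = of_int n / of_int d" using quotient_of_div[OF q] .
  have "r > 0" using assms by (simp add: r)
  have powers: "r ^ j \<in> atoms r" for j
    using powers_in_atoms[OF assms] .
  have "n \<noteq> d"
  proof
    assume "n = d"
    then have "quotient_of r = (1, 1)" using r \<open>d > 1\<close> by simp
    with q \<open>d > 1\<close> show False by simp
  qed
  then have "of_nat (nat d) * r = of_nat (nat n)" "nat n \<noteq> nat d"
    using r \<open>n > 1\<close> \<open>d > 1\<close> by auto
  define k where "k = min (nat n) (nat d)"
  have long: "\<exists>A B. size A = k \<and> M \<le> size B \<and> pow_sum r A = pow_sum r B" for M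
    unfolding k_def using pow_sum_eq_unbounded_size \<open>of_nat (nat d) * r = _\<close> \<open>nat n \<noteq> _\<close> by blast
  have "1 \<le> k" using \<open>n > 1\<close> \<open>d > 1\<close> by (simp add: k_def Suc_le_eq)
  show "elasticity r = \<infinity>"
    using elasticity_eq_infinity[OF \<open>r > 0\<close> \<open>1 \<le> k\<close> powers long] .
  show "\<exists>k\<ge>1. local_elasticity r k = \<infinity>"
    using local_elasticity_eq_infinity[OF powers long] \<open>1 \<le> k\<close> by blast
qed

theorem corollary4p10:
  fixes r :: rat
  assumes "r > 0" and "atomic r"
  shows "elasticity r < \<infinity> \<longleftrightarrow> (\<forall>k::nat. k \<ge> 1 \<longrightarrow> local_elasticity r k < \<infinity>)"
proof -
  obtain n d where q: "quotient_of r = (n, d)" by fastforce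
  have r: "r = of_int n / of_int d" and "d > 0"
    using quotient_of_div[OF q] quotient_of_denom_pos[OF q] by auto
  have "n > 0" using \<open>r > 0\<close> \<open>d > 0\<close> by (simp add: r zero_less_divide_iff)
  show ?thesis
  proof (cases "d = 1")
    case True
    then have "r = of_nat (nat n)" using r \<open>n > 0\<close> by simp
    then show ?thesis
      using le_less_trans[OF elasticity_of_nat, where z = \<infinity>]
        le_less_trans[OF local_elasticity_of_nat, where z = \<infinity>]
      by simp
  next
    case False
    with \<open>d > 0\<close> have "d > 1" by simp
    moreover have "n \<noteq> 1"
      using not_atomic_if_numerator_one q \<open>d > 1\<close> \<open>atomic r\<close> by blast
    ultimately show ?thesis
      using elasticities_infinite[OF q] \<open>n > 0\<close> by force
  qed
qed

end
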